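(* Let $K_1\subset\mathbb C$ and $K_2\subset\mathbb C^m$ be compact sets. Under the identification of $C(K_1\times K_2)$ with $C(K_1,C(K_2))$ given by $F\mapsto (x\mapsto F(x,\cdot))$, we have \[ \overline{\mathcal O}\big(K_1,\overline{\mathcal O}(K_2)\big)\subset\overline{\mathcal O}(K_1\times K_2). \]
   Context: For a compact $K\subset\mathbb C^n$, $\overline{\mathcal O}(K)$ is the closure in $C(K)$ (supremum norm) of restrictions to $K$ of functions holomorphic on some open neighbourhood of $K$. For a planar compact $K_1$ and a Banach space $W$, $C(K_1,W)$ is the Banach space of continuous maps $K_1\to W$ with the supremum norm, and $\overline{\mathcal O}(K_1,W)$ is the closure in $C(K_1,W)$ of the set of (restrictions of) $W$-valued functions holomorphic on some open neighbourhood of $K_1$ in $\mathbb C$. Here $W=\overline{\mathcal O}(K_2)\subset C(K_2)$, so $C(K_1,W)$ is viewed as a subspace of $C(K_1\times K_2)$. *)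

theory Defs
  imports "HOL-Analysis.Analysis"
begin

definition holo_vec :: "(complex^'n \<Rightarrow> complex) \<Rightarrow> (complex^'n) set \<Rightarrow> bool" where
  "holo_vec f U \<longleftrightarrow> open U \<and>
     (\<forall>z\<in>U. \<exists>L. (f has_derivative L) (at z) \<and> (\<forall>c v. L (c *s v) = c * L v))"

definition Obar :: "(complex^'n) set \<Rightarrow> (complex^'n \<Rightarrow> complex) set" where
  "Obar K = {g. continuous_on K g \<and>
     (\<forall>\<epsilon>>0. \<exists>U f. K \<subseteq> U \<and> holo_vec f U \<and> (\<forall>x\<in>K. cmod (g x - f x) \<le> \<epsilon>))}"

text \<open>W-valued holomorphic functions, W = Obar K2 with the sup norm over K2:
  H z \<in> W for z \<in> U, and at each z the difference quotients converge
  uniformly on K2 (i.e. in the norm of W) to some element D of W.\<close>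

definition holoW :: "(complex^'m) set \<Rightarrow> (complex \<Rightarrow> complex^'m \<Rightarrow> complex) \<Rightarrow> complex set \<Rightarrow> bool" where
  "holoW K2 H U \<longleftrightarrow> open U \<and> (\<forall>z\<in>U. H z \<in> Obar K2) \<and>
     (\<forall>z\<in>U. \<exists>D \<in> Obar K2. uniform_limit K2 (\<lambda>t w. (H (z + t) w - H z w) / t) D (at 0))"

text \<open>\<open>ObarW K1 K2\<close> = Obar(K1, Obar(K2)) \<subseteq> C(K1, Obar(K2)).\<close>

definition ObarW :: "complex set \<Rightarrow> (complex^'m) set \<Rightarrow> (complex \<Rightarrow> complex^'m \<Rightarrow> complex) set" where
  "ObarW K1 K2 = {\<Phi>. (\<forall>x\<in>K1. \<Phi> x \<in> Obar K2) \<and>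
     (\<forall>x\<in>K1. uniform_limit K2 (\<lambda>y. \<Phi> y) (\<Phi> x) (at x within K1)) \<and>
     (\<forall>\<epsilon>>0. \<exists>U H. K1 \<subseteq> U \<and> holoW K2 H U \<and>
         (\<forall>x\<in>K1. \<forall>w\<in>K2. cmod (\<Phi> x w - H x w) \<le> \<epsilon>))}"

text \<open>C x C^m = C^{1+m}, coordinates indexed by unit + 'm.\<close>

definition pair_vec :: "complex \<Rightarrow> complex^'m \<Rightarrow> complex^(unit + 'm)" where
  "pair_vec z w = (\<chi> i. case i of Inl _ \<Rightarrow> z | Inr j \<Rightarrow> w $ j)"

end

theory Submission
  imports Defs "HOL-Complex_Analysis.Cauchy_Integral_Formula"
begin

text \<open>Approximate \<open>F\<close> uniformly on \<open>K1 \<times> K2\<close> by a map \<open>H\<close> that is holomorphic in \<open>z\<close> near \<open>K1\<close>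
  with values in \<open>Obar K2\<close>. Covering \<open>K1\<close> by a fine square grid, Cauchy's formula writes
  \<open>H z\<close>, for \<open>z \<in> K1\<close>, as a finite combination of integrals of \<open>H \<zeta> / (\<zeta> - z)\<close> along grid
  edges that avoid \<open>K1\<close>. Since \<open>H\<close> is jointly continuous, Riemann sums approximate these
  integrals uniformly in \<open>(z, w)\<close>, giving \<open>H z w \<approx> \<Sum>\<^sub>k \<alpha>\<^sub>k H \<zeta>\<^sub>k w / (\<zeta>\<^sub>k - z)\<close>
  with finitely many nodes \<open>\<zeta>\<^sub>k \<notin> K1\<close>. Replacing each \<open>H \<zeta>\<^sub>k \<in> Obar K2\<close> by a function
  holomorphic near \<open>K2\<close> yields a function holomorphic in \<open>(z, w)\<close> near \<open>K1 \<times> K2\<close>.\<close>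

section \<open>Holomorphic functions on open subsets of \<open>\<complex>\<^sup>n\<close>\<close>

lemma holo_vec_subset: "holo_vec f U \<Longrightarrow> open V \<Longrightarrow> V \<subseteq> U \<Longrightarrow> holo_vec f V"
  unfolding holo_vec_def by blast

lemma holo_vec_const: "open U \<Longrightarrow> holo_vec (\<lambda>v. c) U"
  unfolding holo_vec_def by (auto intro!: exI[of _ "\<lambda>_. 0"] derivative_eq_intros)

lemma holo_vec_add:
  assumes "holo_vec f U" "holo_vec g U"
  shows "holo_vec (\<lambda>v. f v + g v) U"
  unfolding holo_vec_def
proof (intro conjI ballI)
  show "open U" using assms unfolding holo_vec_def by blast
  fix z assume "z \<in> U"
  then obtain L1 L2 where
    L1: "(f has_derivative L1) (at z)" "\<forall>c v. L1 (c *s v) = c * L1 v" and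
    L2: "(g has_derivative L2) (at z)" "\<forall>c v. L2 (c *s v) = c * L2 v"
    using assms unfolding holo_vec_def by meson
  show "\<exists>L. ((\<lambda>v. f v + g v) has_derivative L) (at z) \<and> (\<forall>c v. L (c *s v) = c * L v)"
    using L1 L2 by (intro exI[of _ "\<lambda>v. L1 v + L2 v"]) (auto intro: has_derivative_add simp: algebra_simps)
qed

lemma holo_vec_mult:
  assumes "holo_vec f U" "holo_vec g U"
  shows "holo_vec (\<lambda>v. f v * g v) U"
  unfolding holo_vec_def
proof (intro conjI ballI)
  show "open U" using assms unfolding holo_vec_def by blast
  fix z assume "z \<in> U"
  then obtain L1 L2 where
    L1: "(f has_derivative L1) (at z)" "\<forall>c v. L1 (c *s v) = c * L1 v" and
    L2: "(g has_derivative L2) (at z)" "\<forall>c v. L2 (c *s v) = c * L2 v"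
    using assms unfolding holo_vec_def by meson
  show "\<exists>L. ((\<lambda>v. f v * g v) has_derivative L) (at z) \<and> (\<forall>c v. L (c *s v) = c * L v)"
    using L1 L2 by (intro exI[of _ "\<lambda>v. f z * L2 v + L1 v * g z"] conjI has_derivative_mult)
      (auto simp: algebra_simps)
qed

lemma holo_vec_sum:
  assumes "finite A" "open U" "\<And>a. a \<in> A \<Longrightarrow> holo_vec (f a) U"
  shows "holo_vec (\<lambda>v. \<Sum>a\<in>A. f a v) U"
  using assms by (induction A rule: finite_induct) (auto intro: holo_vec_add holo_vec_const)

lemma holo_vec_holomorphic_component:
  assumes "f holomorphic_on S" "open S"
  shows "holo_vec (\<lambda>v. f (v $ i)) {v. v $ i \<in> S}"
  unfolding holo_vec_def
proof (intro conjI ballI)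
  show "open {v. v $ i \<in> S}"
    using assms(2) by (intro open_vimage[unfolded vimage_def] continuous_intros)
  fix z assume "z \<in> {v. v $ i \<in> S}"
  then have "(f has_derivative (\<lambda>h. deriv f (z $ i) * h)) (at (z $ i))"
    using holomorphic_derivI[OF assms] by (simp add: has_field_derivative_def)
  then have "((\<lambda>v. f (v $ i)) has_derivative (\<lambda>h. deriv f (z $ i) * h $ i)) (at z)"
    using has_derivative_compose[OF bounded_linear_imp_has_derivative[OF bounded_linear_vec_nth]]
    by blast
  then show "\<exists>L. ((\<lambda>v. f (v $ i)) has_derivative L) (at z) \<and> (\<forall>c v. L (c *s v) = c * L v)"
    by (intro exI[of _ "\<lambda>h. deriv f (z $ i) * h $ i"]) auto
qed

lemma holo_vec_compose_linear:
  assumes "holo_vec g V" "bounded_linear T" "\<And>c v. T (c *s v) = c *s T v"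
  shows "holo_vec (\<lambda>v. g (T v)) (T -` V)"
  unfolding holo_vec_def
proof (intro conjI ballI)
  show "open (T -` V)"
    using assms(1,2) unfolding holo_vec_def by (intro open_vimage linear_continuous_on) auto
  fix z assume "z \<in> T -` V"
  then obtain L where L: "(g has_derivative L) (at (T z))" "\<forall>c v. L (c *s v) = c * L v"
    using assms(1) unfolding holo_vec_def by blast
  have "((\<lambda>v. g (T v)) has_derivative (\<lambda>h. L (T h))) (at z)"
    using has_derivative_compose[OF bounded_linear_imp_has_derivative[OF assms(2)] L(1)]
    by (simp add: o_def)
  then show "\<exists>L. ((\<lambda>v. g (T v)) has_derivative L) (at z) \<and> (\<forall>c v. L (c *s v) = c * L v)"
    using L(2) assms(3) by (intro exI[of _ "\<lambda>h. L (T h)"]) simp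
qed

definition snd_vec :: "complex^(unit + 'm) \<Rightarrow> complex^'m" where
  "snd_vec v = (\<chi> j. v $ Inr j)"

lemma bounded_linear_snd_vec: "bounded_linear snd_vec"
  by (rule linear_conv_bounded_linear[THEN iffD1], rule linearI) (auto simp: snd_vec_def vec_eq_iff)

lemma snd_vec_scaleC: "snd_vec (c *s v) = c *s snd_vec v"
  by (simp add: snd_vec_def vec_eq_iff)

lemma pair_vec_simps [simp]:
  "pair_vec z w $ Inl u = z" "snd_vec (pair_vec z w) = w"
  by (simp_all add: pair_vec_def snd_vec_def vec_eq_iff)

lemma holo_vec_Cauchy_kernel_sum:
  fixes g :: "complex \<Rightarrow> complex^'m \<Rightarrow> complex"
  assumes "finite N" "\<And>\<zeta>. \<zeta> \<in> N \<Longrightarrow> holo_vec (g \<zeta>) (V \<zeta>)"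
  shows "holo_vec (\<lambda>v. \<Sum>\<zeta>\<in>N. \<alpha> \<zeta> * g \<zeta> (snd_vec v) / (\<zeta> - v $ Inl ()))
           (\<Inter>\<zeta>\<in>N. {v. v $ Inl () \<noteq> \<zeta> \<and> snd_vec v \<in> V \<zeta>})"
    (is "holo_vec _ ?\<Omega>")
proof (rule holo_vec_sum)
  have pole: "holo_vec (\<lambda>v. 1 / (\<zeta> - v $ Inl ())) {v. v $ Inl () \<in> - {\<zeta>}}" for \<zeta>
    by (rule holo_vec_holomorphic_component) (auto intro!: holomorphic_intros)
  have num: "holo_vec (\<lambda>v. g \<zeta> (snd_vec v)) (snd_vec -` V \<zeta>)" if "\<zeta> \<in> N" for \<zeta>
    using assms(2)[OF that] bounded_linear_snd_vec snd_vec_scaleC by (rule holo_vec_compose_linear)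
  have "open (snd_vec -` V \<zeta>)" if "\<zeta> \<in> N" for \<zeta>
    using num[OF that] unfolding holo_vec_def by blast
  moreover have "open {v::complex^(unit + 'm). v $ Inl () \<in> - {\<zeta>}}" for \<zeta>
    using pole unfolding holo_vec_def by blast
  ultimately show "open ?\<Omega>"
    using assms(1) by (intro open_INT) (auto simp: Collect_conj_eq vimage_def)
  fix \<zeta> assume \<zeta>: "\<zeta> \<in> N"
  have "?\<Omega> \<subseteq> snd_vec -` V \<zeta>" "?\<Omega> \<subseteq> {v. v $ Inl () \<in> - {\<zeta>}}"
    using \<zeta> by auto
  then have "holo_vec (\<lambda>v. g \<zeta> (snd_vec v)) ?\<Omega>" "holo_vec (\<lambda>v. 1 / (\<zeta> - v $ Inl ())) ?\<Omega>"
    using holo_vec_subset[OF num[OF \<zeta>] \<open>open ?\<Omega>\<close>] holo_vec_subset[OF pole \<open>open ?\<Omega>\<close>]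
    by blast+
  from holo_vec_mult[OF holo_vec_mult[OF holo_vec_const[OF \<open>open ?\<Omega>\<close>] this(1)] this(2)]
  show "holo_vec (\<lambda>v. \<alpha> \<zeta> * g \<zeta> (snd_vec v) / (\<zeta> - v $ Inl ())) ?\<Omega>"
    by simp
qed (fact assms(1))

section \<open>Joint continuity\<close>

lemma continuous_on_Times_uniform_limit:
  fixes G :: "'a::metric_space \<Rightarrow> 'b::metric_space \<Rightarrow> 'c::metric_space"
  assumes unif: "\<And>x. x \<in> A \<Longrightarrow> uniform_limit B G (G x) (at x within A)"
    and cont: "\<And>x. x \<in> A \<Longrightarrow> continuous_on B (G x)"
  shows "continuous_on (A \<times> B) (\<lambda>(x, y). G x y)"
  unfolding continuous_on_iff
proof (intro ballI allI impI)
  fix p e assume "p \<in> A \<times> B" and e: "(0::real) < e"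
  then obtain x y where p: "p = (x, y)" "x \<in> A" "y \<in> B" by auto
  have "\<forall>\<^sub>F x' in at x within A. \<forall>y'\<in>B. dist (G x' y') (G x y') < e/2"
    using unif[OF p(2)] half_gt_zero[OF e] unfolding uniform_limit_iff by blast
  then obtain d1 where d1: "d1 > 0"
    "\<And>x'. x' \<in> A \<Longrightarrow> dist x' x < d1 \<Longrightarrow> \<forall>y'\<in>B. dist (G x' y') (G x y') < e/2"
    unfolding eventually_at using e by (metis dist_self half_gt_zero)
  obtain d2 where d2: "d2 > 0" "\<And>y'. y' \<in> B \<Longrightarrow> dist y' y < d2 \<Longrightarrow> dist (G x y') (G x y) < e/2"
    using cont[OF p(2)] p(3) e unfolding continuous_on_iff by (meson half_gt_zero)
  show "\<exists>d>0. \<forall>p'\<in>A \<times> B. dist p' p < d \<longrightarrow> dist ((\<lambda>(x, y). G x y) p') ((\<lambda>(x, y). G x y) p) < e"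
  proof (intro exI[of _ "min d1 d2"] conjI ballI impI)
    fix p' assume "p' \<in> A \<times> B" "dist p' p < min d1 d2"
    then obtain x' y' where p': "p' = (x', y')" "x' \<in> A" "y' \<in> B" "dist x' x < d1" "dist y' y < d2"
      using p dist_fst_le[of p' p] dist_snd_le[of p' p] by (cases p') auto
    have "dist (G x' y') (G x y) \<le> dist (G x' y') (G x y') + dist (G x y') (G x y)"
      by (rule dist_triangle)
    also have "\<dots> < e/2 + e/2"
      using d1(2)[OF p'(2,4)] d2(2)[OF p'(3,5)] p'(3) by (intro add_strict_mono) auto
    finally show "dist ((\<lambda>(x, y). G x y) p') ((\<lambda>(x, y). G x y) p) < e"
      using p p' by simp
  qed (use d1 d2 in auto)
qed

lemma ObarW_continuous_on:
  assumes "F \<in> ObarW K1 K2"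
  shows "continuous_on (K1 \<times> K2) (\<lambda>(z, w). F z w)"
  using assms unfolding ObarW_def Obar_def by (intro continuous_on_Times_uniform_limit) auto

lemma Obar_bounded: "g \<in> Obar K \<Longrightarrow> compact K \<Longrightarrow> bounded (g ` K)"
  unfolding Obar_def by (auto intro: compact_imp_bounded compact_continuous_image)

lemma holoW_uniform_limit:
  assumes H: "holoW K H U" and K: "compact K" and z: "z \<in> U"
  shows "uniform_limit K H (H z) (at z)"
proof -
  obtain D where D: "D \<in> Obar K" "uniform_limit K (\<lambda>t w. (H (z + t) w - H z w) / t) D (at 0)"
    using H z unfolding holoW_def by blast
  have "uniform_limit K (\<lambda>t w. t) (\<lambda>w. 0) (at (0::complex))"
    using tendsto_iff[THEN iffD1, OF tendsto_ident_at[of "0::complex" UNIV]] by (simp add: uniform_limit_iff dist_norm)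
  then have "uniform_limit K (\<lambda>t w. t * ((H (z + t) w - H z w) / t)) (\<lambda>w. 0 * D w) (at 0)"
    by (rule uniform_lim_mult[OF _ D(2) _ Obar_bounded[OF D(1) K]]) (auto simp: bounded_iff)
  then have "uniform_limit K (\<lambda>t w. t * ((H (z + t) w - H z w) / t) + H z w) (\<lambda>w. 0 * D w + H z w) (at 0)"
    by (intro uniform_limit_add uniform_limit_const)
  moreover have "\<forall>\<^sub>F t in at 0. \<forall>w\<in>K. t * ((H (z + t) w - H z w) / t) + H z w = H (t + z) w"
    by (auto simp: eventually_at_filter add.commute)
  ultimately have "uniform_limit K (\<lambda>t. H (t + z)) (H z) (at 0)"
    using uniform_limit_cong by fastforce
  then show ?thesis
    by (simp add: at_to_0[of z] filterlim_filtermap)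
qed

lemma holoW_holomorphic:
  assumes "holoW K H U" "w \<in> K"
  shows "(\<lambda>z. H z w) holomorphic_on U"
proof (rule holomorphic_on_open[THEN iffD2])
  show "open U" using assms(1) unfolding holoW_def by blast
  show "\<forall>z\<in>U. \<exists>f'. ((\<lambda>z. H z w) has_field_derivative f') (at z)"
  proof
    fix z assume "z \<in> U"
    then obtain D where "uniform_limit K (\<lambda>t w. (H (z + t) w - H z w) / t) D (at 0)"
      using assms(1) unfolding holoW_def by blast
    from tendsto_uniform_limitI[OF this assms(2)]
    show "\<exists>f'. ((\<lambda>z. H z w) has_field_derivative f') (at z)"
      by (auto simp: DERIV_def)
  qed
qed

lemma holoW_continuous_on:
  assumes "holoW K H U" "compact K"
  shows "continuous_on (U \<times> K) (\<lambda>(z, w). H z w)"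
proof (rule continuous_on_Times_uniform_limit)
  fix z assume "z \<in> U"
  then show "uniform_limit K H (H z) (at z within U)"
    using filterlim_mono[OF holoW_uniform_limit[OF assms] order.refl at_within_le_at] by blast
  show "continuous_on K (H z)"
    using assms(1) \<open>z \<in> U\<close> unfolding holoW_def Obar_def by blast
qed

section \<open>Riemann sums along segments\<close>

lemma subpath_linepath: "subpath u v (linepath a b) = linepath (linepath a b u) (linepath a b v)"
  by (simp add: subpath_def linepath_def fun_eq_iff algebra_simps)

lemma linepath_diff: "linepath a b t - linepath a b s = (t - s) *\<^sub>R (b - a)"
  by (simp add: linepath_def algebra_simps)

lemma norm_contour_integral_linepath_minus_le:
  assumes f: "continuous_on (closed_segment a b) f"
    and B: "\<And>x. x \<in> closed_segment a b \<Longrightarrow> cmod (f x - f a) \<le> B"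
  shows "cmod (contour_integral (linepath a b) f - f a * (b - a)) \<le> B * cmod (b - a)"
proof (rule has_contour_integral_bound_linepath)
  show "((\<lambda>x. f x - f a) has_contour_integral contour_integral (linepath a b) f - f a * (b - a)) (linepath a b)"
    using f by (intro has_contour_integral_diff has_contour_integral_const_linepath has_contour_integral_integral
        contour_integrable_continuous_linepath)
  show "0 \<le> B"
    using B[of a] by simp
qed (use B in simp)

lemma contour_integral_linepath_partition:
  assumes f: "continuous_on (closed_segment a b) f" and n: "n > 0"
  shows "contour_integral (linepath a b) f =
    (\<Sum>i<n. contour_integral (linepath (linepath a b (i/n)) (linepath a b (Suc i/n))) f)"
proof -
  have int: "f contour_integrable_on linepath a b"
    using f by (rule contour_integrable_continuous_linepath)
  have "contour_integral (subpath 0 (m/n) (linepath a b)) f =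
      (\<Sum>i<m. contour_integral (linepath (linepath a b (i/n)) (linepath a b (Suc i/n))) f)" if "m \<le> n" for m
    using that
  proof (induction m)
    case 0
    then show ?case using contour_integral_trivial[of a f] by (simp add: subpath_linepath linepath_0' linepath_refl)
  next
    case (Suc m)
    have "contour_integral (subpath 0 (m/n) (linepath a b)) f
        + contour_integral (subpath (m/n) (Suc m/n) (linepath a b)) f
        = contour_integral (subpath 0 (Suc m/n) (linepath a b)) f"
      using Suc.prems by (intro contour_integral_subpath_combine int) auto
    then show ?case
      using Suc by (simp add: subpath_linepath)
  qed
  from this[of n] show ?thesis
    using n by simp
qed

lemma contour_integral_linepath_Riemann_sum_le:
  fixes a b :: complex and n :: nat
  assumes f: "continuous_on (closed_segment a b) f" and n: "n > 0"
    and modulus: "\<And>x y. x \<in> closed_segment a b \<Longrightarrow> y \<in> closed_segment a b \<Longrightarrow>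
      cmod (x - y) \<le> cmod (b - a) / n \<Longrightarrow> cmod (f x - f y) \<le> B"
  shows "cmod (contour_integral (linepath a b) f - (\<Sum>i<n. f (linepath a b (i/n)) * ((b - a) / n)))
    \<le> B * cmod (b - a)"
proof -
  let ?q = "\<lambda>i. linepath a b (i/n)"
  have piece: "cmod (contour_integral (linepath (?q i) (?q (Suc i))) f - f (?q i) * ((b - a) / n))
      \<le> B * (cmod (b - a) / n)" if "i < n" for i
  proof -
    have q: "?q i \<in> closed_segment a b" "?q (Suc i) \<in> closed_segment a b"
      using \<open>i < n\<close> by (auto intro!: linepath_in_path simp: field_simps)
    then have sub: "closed_segment (?q i) (?q (Suc i)) \<subseteq> closed_segment a b"
      by (rule closed_segment_subset[OF _ _ convex_closed_segment])
    have step: "?q (Suc i) - ?q i = (b - a) / n"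
      by (simp add: linepath_diff diff_divide_distrib[symmetric] scaleR_conv_of_real)
    have "cmod (f x - f (?q i)) \<le> B" if x: "x \<in> closed_segment (?q i) (?q (Suc i))" for x
    proof (rule modulus)
      show "cmod (x - ?q i) \<le> cmod (b - a) / n"
        using segment_bound(1)[OF x] unfolding step by (simp add: norm_divide)
    qed (use sub x q in auto)
    from norm_contour_integral_linepath_minus_le[OF continuous_on_subset[OF f sub] this]
    show ?thesis
      unfolding step by (simp add: norm_divide)
  qed
  have "contour_integral (linepath a b) f - (\<Sum>i<n. f (?q i) * ((b - a) / n))
      = (\<Sum>i<n. contour_integral (linepath (?q i) (?q (Suc i))) f - f (?q i) * ((b - a) / n))"
    using contour_integral_linepath_partition[OF f n] by (simp add: sum_subtractf)
  also have "cmod \<dots> \<le> (\<Sum>i<n. B * (cmod (b - a) / n))"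
    by (rule order_trans[OF norm_sum sum_mono]) (use piece in auto)
  also have "\<dots> = B * cmod (b - a)"
    using n by simp
  finally show ?thesis .
qed

lemma contour_integral_linepath_Riemann_sum:
  fixes a b :: complex and \<phi> :: "complex \<Rightarrow> 'p::metric_space \<Rightarrow> complex"
  assumes P: "compact P" and \<phi>: "continuous_on (closed_segment a b \<times> P) (\<lambda>(\<zeta>, p). \<phi> \<zeta> p)"
    and e: "e > 0"
  obtains n :: nat where "n > 0" "\<And>p. p \<in> P \<Longrightarrow> cmod (contour_integral (linepath a b) (\<lambda>\<zeta>. \<phi> \<zeta> p)
      - (\<Sum>i<n. \<phi> (linepath a b (i/n)) p * ((b - a) / n))) \<le> e"
proof -
  define e' where "e' = e / (cmod (b - a) + 1)"
  have "cmod (b - a) + 1 > 0"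
    by (simp add: add_nonneg_pos)
  then have e': "e' > 0" "e' * cmod (b - a) \<le> e"
    using e by (auto simp: e'_def pos_divide_le_eq)
  have "uniformly_continuous_on (closed_segment a b \<times> P) (\<lambda>(\<zeta>, p). \<phi> \<zeta> p)"
    using \<phi> P by (intro compact_uniformly_continuous compact_Times) auto
  then obtain d where d: "d > 0" "\<And>x x'. x \<in> closed_segment a b \<times> P \<Longrightarrow> x' \<in> closed_segment a b \<times> P \<Longrightarrow>
      dist x' x < d \<Longrightarrow> dist ((\<lambda>(\<zeta>, p). \<phi> \<zeta> p) x') ((\<lambda>(\<zeta>, p). \<phi> \<zeta> p) x) < e'"
    unfolding uniformly_continuous_on_def using e' by metis
  obtain n :: nat where n: "n > 0" "cmod (b - a) / n < d"
  proof -
    obtain n :: nat where "cmod (b - a) / d < n" using reals_Archimedean2 by blast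
    then show thesis
      using d that[of n] by (cases "n = 0") (auto simp: field_simps)
  qed
  have "cmod (contour_integral (linepath a b) (\<lambda>\<zeta>. \<phi> \<zeta> p)
      - (\<Sum>i<n. \<phi> (linepath a b (i/n)) p * ((b - a) / n))) \<le> e' * cmod (b - a)" if p: "p \<in> P" for p
  proof (rule contour_integral_linepath_Riemann_sum_le[OF _ n(1)])
    show "continuous_on (closed_segment a b) (\<lambda>\<zeta>. \<phi> \<zeta> p)"
      using continuous_on_compose2[OF \<phi> continuous_on_Pair[OF continuous_on_id continuous_on_const]] p
      by force
    fix x y assume "x \<in> closed_segment a b" "y \<in> closed_segment a b" "cmod (x - y) \<le> cmod (b - a) / n"
    with d(2)[of "(y, p)" "(x, p)"] n(2) p show "cmod (\<phi> x p - \<phi> y p) \<le> e'"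
      by (simp add: dist_Pair_Pair dist_norm)
  qed
  with e'(2) show thesis
    using that n(1) by (meson order_trans)
qed
section \<open>Cauchy's integral formula on a compact set\<close>

lemma contour_integral_rectpath_sides:
  assumes f: "continuous_on (path_image (rectpath p q)) f"
  defines "p' \<equiv> Complex (Re q) (Im p)" and "q' \<equiv> Complex (Re p) (Im q)"
  shows "contour_integral (rectpath p q) f = contour_integral (linepath p p') f
    + contour_integral (linepath p' q) f - contour_integral (linepath q' q) f - contour_integral (linepath p q') f"
proof -
  have pim: "path_image (rectpath p q) =
      closed_segment p p' \<union> (closed_segment p' q \<union> (closed_segment q q' \<union> closed_segment q' p))"
    unfolding rectpath_def Let_def p'_def[symmetric] q'_def[symmetric] by (simp add: path_image_join)
  have ct: "continuous_on (closed_segment p p') f" "continuous_on (closed_segment p' q) f"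
     "continuous_on (closed_segment q q') f" "continuous_on (closed_segment q' p) f"
    using f unfolding pim by (auto elim: continuous_on_subset)
  then have "contour_integral (rectpath p q) f = contour_integral (linepath p p') f
      + (contour_integral (linepath p' q) f + (contour_integral (linepath q q') f + contour_integral (linepath q' p) f))"
    unfolding rectpath_def Let_def p'_def[symmetric] q'_def[symmetric]
    by (simp add: contour_integrable_joinI contour_integrable_continuous_linepath)
  then show ?thesis
    using contour_integral_reverse_linepath[OF ct(3)] contour_integral_reverse_linepath[OF ct(4)] by simp
qed

lemma Cauchy_integral_rectpath:
  assumes S: "open S" "convex S" "cbox p q \<subseteq> S" and pq: "Re p \<le> Re q" "Im p \<le> Im q"
    and h: "h holomorphic_on S" and z: "z \<notin> path_image (rectpath p q)"
  shows "contour_integral (rectpath p q) (\<lambda>\<zeta>. h \<zeta> / (\<zeta> - z)) = (if z \<in> box p q then 2 * pi * \<i> * h z else 0)"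
proof -
  have pim: "path_image (rectpath p q) = cbox p q - box p q"
    using pq by (rule path_image_rectpath_cbox_minus_box)
  show ?thesis
  proof (cases "z \<in> S")
    case True
    have "((\<lambda>\<zeta>. h \<zeta> / (\<zeta> - z)) has_contour_integral (2 * pi * \<i> * winding_number (rectpath p q) z * h z))
        (rectpath p q)"
      using S True pim z h by (intro Cauchy_integral_formula_convex_simple) (auto simp: interior_open)
    moreover have "winding_number (rectpath p q) z = (if z \<in> box p q then 1 else 0)"
      using pim z pq by (auto simp: winding_number_rectpath winding_number_rectpath_outside)
    ultimately show ?thesis
      using contour_integral_unique by fastforce
  next
    case False
    then have "((\<lambda>\<zeta>. h \<zeta> / (\<zeta> - z)) has_contour_integral 0) (rectpath p q)"
      using S pim by (intro Cauchy_theorem_convex_simple[OF _ S(2)]) (auto intro!: holomorphic_intros h)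
    moreover have "z \<notin> box p q"
      using False S box_subset_cbox by blast
    ultimately show ?thesis
      using contour_integral_unique by fastforce
  qed
qed

lemma sum_reindex_of_bool:
  fixes g :: "'a \<Rightarrow> 'b::comm_ring_1"
  assumes "finite R" "inj f" "f ` I \<subseteq> R"
  shows "(\<Sum>x\<in>I. g (f x)) = (\<Sum>y\<in>R. of_bool (y \<in> f ` I) * g y)"
proof -
  have "(\<Sum>x\<in>I. g (f x)) = (\<Sum>y\<in>f ` I. g y)"
    using assms(2) by (simp add: sum.reindex inj_on_def inj_def)
  also have "\<dots> = (\<Sum>y\<in>R. of_bool (y \<in> f ` I) * g y)"
    using assms(1,3) by (intro sum.mono_neutral_cong_left) auto
  finally show ?thesis .
qed

lemma sum_grid_telescope:
  fixes hor ver :: "int \<times> int \<Rightarrow> 'a::comm_ring_1"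
  assumes R: "finite R" and I: "\<And>i j. (i, j) \<in> I \<Longrightarrow> (i, j) \<in> R \<and> (i + 1, j) \<in> R \<and> (i, j + 1) \<in> R"
  shows "(\<Sum>(i, j)\<in>I. hor (i, j) + ver (i + 1, j) - hor (i, j + 1) - ver (i, j)) =
    (\<Sum>(i, j)\<in>R. (of_bool ((i, j) \<in> I) - of_bool ((i, j - 1) \<in> I)) * hor (i, j)
                + (of_bool ((i - 1, j) \<in> I) - of_bool ((i, j) \<in> I)) * ver (i, j))"
proof -
  have shift: "(\<Sum>(i, j)\<in>I. g (i + di, j + dj)) = (\<Sum>(i, j)\<in>R. of_bool ((i - di, j - dj) \<in> I) * g (i, j))"
    if "\<And>i j. (i, j) \<in> I \<Longrightarrow> (i + di, j + dj) \<in> R" for g :: "int \<times> int \<Rightarrow> 'a" and di dj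
  proof -
    let ?t = "\<lambda>(i, j). (i + di, j + dj)"
    have img: "?t ` I \<subseteq> R" and inj: "inj ?t"
      using that by (auto simp: inj_def)
    have "y \<in> ?t ` I \<longleftrightarrow> (fst y - di, snd y - dj) \<in> I" for y
      by (cases y) (force simp: image_iff)
    with sum_reindex_of_bool[OF R inj img, of g]
    show ?thesis
      by (simp add: case_prod_beta)
  qed
  have "(\<Sum>(i, j)\<in>I. hor (i, j)) = (\<Sum>(i, j)\<in>R. of_bool ((i, j) \<in> I) * hor (i, j))"
    "(\<Sum>(i, j)\<in>I. ver (i, j)) = (\<Sum>(i, j)\<in>R. of_bool ((i, j) \<in> I) * ver (i, j))"
    "(\<Sum>(i, j)\<in>I. ver (i + 1, j)) = (\<Sum>(i, j)\<in>R. of_bool ((i - 1, j) \<in> I) * ver (i, j))"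
    "(\<Sum>(i, j)\<in>I. hor (i, j + 1)) = (\<Sum>(i, j)\<in>R. of_bool ((i, j - 1) \<in> I) * hor (i, j))"
    using shift[of 0 0 hor] shift[of 0 0 ver] shift[of 1 0 ver] shift[of 0 1 hor] I by simp_all
  then have "(\<Sum>(i, j)\<in>I. hor (i, j) + ver (i + 1, j) - hor (i, j + 1) - ver (i, j)) =
      (\<Sum>(i, j)\<in>R. of_bool ((i, j) \<in> I) * hor (i, j)) + (\<Sum>(i, j)\<in>R. of_bool ((i - 1, j) \<in> I) * ver (i, j))
      - (\<Sum>(i, j)\<in>R. of_bool ((i, j - 1) \<in> I) * hor (i, j)) - (\<Sum>(i, j)\<in>R. of_bool ((i, j) \<in> I) * ver (i, j))"
    by (simp add: sum.distrib sum_subtractf case_prod_beta)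
  also have "\<dots> = (\<Sum>(i, j)\<in>R. (of_bool ((i, j) \<in> I) - of_bool ((i, j - 1) \<in> I)) * hor (i, j)
                + (of_bool ((i - 1, j) \<in> I) - of_bool ((i, j) \<in> I)) * ver (i, j))"
    by (simp add: sum.distrib sum_subtractf case_prod_beta algebra_simps)
  finally show ?thesis .
qed

lemma isCont_contour_integral_Cauchy_kernel:
  assumes h: "continuous_on (closed_segment a b) h" and z: "z \<notin> closed_segment a b"
  shows "isCont (\<lambda>y. contour_integral (linepath a b) (\<lambda>\<zeta>. h \<zeta> / (\<zeta> - y))) z"
proof -
  have "((\<lambda>\<zeta>. h \<zeta> / (\<zeta> - w) ^ 1) has_contour_integral contour_integral (linepath a b) (\<lambda>\<zeta>. h \<zeta> / (\<zeta> - w)))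
      (linepath a b)" if "w \<in> UNIV - path_image (linepath a b)" for w
  proof -
    have "continuous_on (closed_segment a b) (\<lambda>\<zeta>. h \<zeta> / (\<zeta> - w))"
      using that h by (intro continuous_intros) auto
    then show ?thesis
      by (simp add: has_contour_integral_integral contour_integrable_continuous_linepath)
  qed
  then have "((\<lambda>y. contour_integral (linepath a b) (\<lambda>\<zeta>. h \<zeta> / (\<zeta> - y))) has_field_derivative
      (of_nat 1 * contour_integral (linepath a b) (\<lambda>\<zeta>. h \<zeta> / (\<zeta> - z) ^ Suc 1))) (at z)"
    by (intro Cauchy_next_derivative(2)[where B = "cmod (b - a)" and S = UNIV]) (use h z in auto)
  then show ?thesis
    by (rule DERIV_isCont)
qed

lemma eq_on_closure_isCont:
  fixes f g :: "'a::metric_space \<Rightarrow> 'b::t2_space"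
  assumes "isCont f z" "isCont g z" "z \<in> closure S" "\<And>y. y \<in> S \<Longrightarrow> f y = g y"
  shows "f z = g z"
proof -
  obtain x where x: "\<forall>n. x n \<in> S" "x \<longlonglongrightarrow> z"
    using closure_sequential[THEN iffD1, OF assms(3)] by blast
  have "(\<lambda>n. f (x n)) \<longlonglongrightarrow> f z"
    using assms(1) x(2) by (rule isCont_tendsto_compose)
  moreover have "(\<lambda>n. f (x n)) \<longlonglongrightarrow> g z"
    using isCont_tendsto_compose[OF assms(2) x(2)] assms(4) x(1) by simp
  ultimately show ?thesis
    by (rule LIMSEQ_unique)
qed

definition grid_point :: "real \<Rightarrow> int \<times> int \<Rightarrow> complex" where
  "grid_point \<delta> = (\<lambda>(i, j). Complex (of_int i * \<delta>) (of_int j * \<delta>))"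

definition grid_square :: "real \<Rightarrow> int \<times> int \<Rightarrow> complex set" where
  "grid_square \<delta> = (\<lambda>(i, j). cbox (grid_point \<delta> (i, j)) (grid_point \<delta> (i + 1, j + 1)))"

definition grid_box :: "real \<Rightarrow> int \<times> int \<Rightarrow> complex set" where
  "grid_box \<delta> = (\<lambda>(i, j). box (grid_point \<delta> (i, j)) (grid_point \<delta> (i + 1, j + 1)))"

definition grid_boundary :: "real \<Rightarrow> int \<times> int \<Rightarrow> real \<Rightarrow> complex" where
  "grid_boundary \<delta> = (\<lambda>(i, j). rectpath (grid_point \<delta> (i, j)) (grid_point \<delta> (i + 1, j + 1)))"

definition grid_edge :: "real \<Rightarrow> (int \<times> int) \<times> bool \<Rightarrow> complex \<times> complex" where
  "grid_edge \<delta> = (\<lambda>((i, j), horizontal). (grid_point \<delta> (i, j),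
     if horizontal then grid_point \<delta> (i + 1, j) else grid_point \<delta> (i, j + 1)))"

text \<open>Horizontal grid edges run to the right and vertical ones upwards. The multiplicity of an
  edge is the signed number of squares in \<open>I\<close> whose positively oriented boundary contains it;
  edges shared by two squares of \<open>I\<close> cancel.\<close>

definition boundary_multiplicity :: "(int \<times> int) set \<Rightarrow> (int \<times> int) \<times> bool \<Rightarrow> int" where
  "boundary_multiplicity I = (\<lambda>((i, j), horizontal).
     if horizontal then of_bool ((i, j) \<in> I) - of_bool ((i, j - 1) \<in> I)
     else of_bool ((i - 1, j) \<in> I) - of_bool ((i, j) \<in> I))"

lemma grid_point_Re_Im [simp]:
  "Re (grid_point \<delta> (i, j)) = of_int i * \<delta>" "Im (grid_point \<delta> (i, j)) = of_int j * \<delta>"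
  by (simp_all add: grid_point_def)

lemma mem_grid_square:
  "y \<in> grid_square \<delta> (i, j) \<longleftrightarrow> of_int i * \<delta> \<le> Re y \<and> Re y \<le> (of_int i + 1) * \<delta> \<and>
     of_int j * \<delta> \<le> Im y \<and> Im y \<le> (of_int j + 1) * \<delta>"
  by (simp add: grid_square_def in_cbox_complex_iff)

lemma mem_grid_box:
  "y \<in> grid_box \<delta> (i, j) \<longleftrightarrow> of_int i * \<delta> < Re y \<and> Re y < (of_int i + 1) * \<delta> \<and>
     of_int j * \<delta> < Im y \<and> Im y < (of_int j + 1) * \<delta>"
  by (simp add: grid_box_def in_box_complex_iff)

lemma grid_box_subset_square: "grid_box \<delta> x \<subseteq> grid_square \<delta> x"
  by (auto simp: grid_box_def grid_square_def box_subset_cbox split: prod.splits)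

lemma closure_grid_box:
  assumes "\<delta> > 0"
  shows "closure (grid_box \<delta> x) = grid_square \<delta> x"
proof (cases x)
  case (Pair i j)
  have "grid_point \<delta> (i, j) + of_real (\<delta> / 2) * (1 + \<i>) \<in> grid_box \<delta> (i, j)"
    using assms by (simp add: mem_grid_box algebra_simps)
  then show ?thesis
    unfolding Pair grid_box_def grid_square_def by (auto intro!: closure_box)
qed

lemma path_image_grid_boundary:
  "\<delta> \<ge> 0 \<Longrightarrow> path_image (grid_boundary \<delta> x) = grid_square \<delta> x - grid_box \<delta> x"
  by (cases x) (auto simp: grid_boundary_def grid_square_def grid_box_def algebra_simps
      intro!: path_image_rectpath_cbox_minus_box)

lemma mem_grid_square_floor: "\<delta> > 0 \<Longrightarrow> z \<in> grid_square \<delta> (\<lfloor>Re z / \<delta>\<rfloor>, \<lfloor>Im z / \<delta>\<rfloor>)"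
  unfolding mem_grid_square
  by (smt (verit, best) floor_divide_lower floor_divide_upper floor_less_iff)

lemma grid_square_eq_of_mem_box:
  assumes "\<delta> > 0" "y \<in> grid_box \<delta> x0" "y \<in> grid_square \<delta> x"
  shows "x = x0"
proof -
  have "i = i0" if "of_int i * \<delta> \<le> t" "t \<le> (of_int i + 1) * \<delta>"
    "of_int i0 * \<delta> < t" "t < (of_int i0 + 1) * \<delta>" for i i0 :: int and t
  proof -
    have "of_int i * \<delta> < (of_int i0 + 1) * \<delta>" "of_int i0 * \<delta> < (of_int i + 1) * \<delta>"
      using that by linarith+
    then have "i < i0 + 1" "i0 < i + 1"
      using assms(1) by (simp_all del: of_int_add add: of_int_add[symmetric])
    then show ?thesis by simp
  qed
  then show ?thesis
    using assms(2,3) by (cases x, cases x0) (auto simp: mem_grid_square mem_grid_box)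
qed

lemma dist_le_grid_square:
  assumes "y \<in> grid_square \<delta> x" "y' \<in> grid_square \<delta> x"
  shows "dist y y' \<le> 2 * \<delta>"
proof -
  obtain i j where x: "x = (i, j)" by fastforce
  have "\<bar>Re (y - y')\<bar> \<le> \<delta>" "\<bar>Im (y - y')\<bar> \<le> \<delta>"
    using assms unfolding x mem_grid_square by (auto simp: abs_le_iff algebra_simps)
  then show ?thesis
    using cmod_le[of "y - y'"] by (simp add: dist_norm)
qed

lemma grid_square_index_bound:
  assumes "\<delta> > 0" "y \<in> grid_square \<delta> (i, j)" "cmod y \<le> B"
  shows "\<bar>i\<bar> \<le> \<lceil>B / \<delta>\<rceil> + 1 \<and> \<bar>j\<bar> \<le> \<lceil>B / \<delta>\<rceil> + 1"
proof -
  have "\<bar>k\<bar> \<le> \<lceil>B / \<delta>\<rceil> + 1" if "of_int k * \<delta> \<le> t" "t \<le> (of_int k + 1) * \<delta>" "\<bar>t\<bar> \<le> B" for k :: int and t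
  proof -
    have "of_int k * \<delta> \<le> B" "- B \<le> (of_int k + 1) * \<delta>"
      using that by linarith+
    then have "of_int k \<le> B / \<delta>" "(- B) / \<delta> \<le> of_int k + 1"
      using assms(1) by (simp_all only: pos_le_divide_eq pos_divide_le_eq)
    then have "k \<le> \<lceil>B / \<delta>\<rceil>" "- k - 1 \<le> \<lceil>B / \<delta>\<rceil>"
      unfolding le_ceiling_iff by simp_all
    then show ?thesis
      by linarith
  qed
  then show ?thesis
    using assms(2,3) abs_Re_le_cmod[of y] abs_Im_le_cmod[of y] unfolding mem_grid_square by force
qed

lemma contour_integral_grid_boundary:
  assumes "continuous_on (path_image (grid_boundary \<delta> (i, j))) f"
  defines "J \<equiv> \<lambda>e. (\<lambda>(a, b). contour_integral (linepath a b) f) (grid_edge \<delta> e)"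
  shows "contour_integral (grid_boundary \<delta> (i, j)) f =
    J ((i, j), True) + J ((i + 1, j), False) - J ((i, j + 1), True) - J ((i, j), False)"
proof -
  have "Complex (Re (grid_point \<delta> (i + 1, j + 1))) (Im (grid_point \<delta> (i, j))) = grid_point \<delta> (i + 1, j)"
    "Complex (Re (grid_point \<delta> (i, j))) (Im (grid_point \<delta> (i + 1, j + 1))) = grid_point \<delta> (i, j + 1)"
    by (simp_all add: grid_point_def)
  with contour_integral_rectpath_sides[OF assms(1)[unfolded grid_boundary_def prod.case]]
  show ?thesis
    by (simp add: J_def grid_boundary_def grid_edge_def)
qed

lemma convex_grid_square: "convex (grid_square \<delta> x)"
  by (cases x) (simp add: grid_square_def)

lemma grid_edge_subset_squares:
  assumes "\<delta> \<ge> 0" "grid_edge \<delta> ((i, j), horizontal) = (a, b)"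
  shows "closed_segment a b \<subseteq> grid_square \<delta> (i, j)"
    "closed_segment a b \<subseteq> grid_square \<delta> (if horizontal then (i, j - 1) else (i - 1, j))"
proof -
  have ab: "a = grid_point \<delta> (i, j)" "b = (if horizontal then grid_point \<delta> (i + 1, j) else grid_point \<delta> (i, j + 1))"
    using assms(2) by (simp_all add: grid_edge_def)
  have "a \<in> grid_square \<delta> (i, j)" "b \<in> grid_square \<delta> (i, j)"
    "a \<in> grid_square \<delta> (if horizontal then (i, j - 1) else (i - 1, j))"
    "b \<in> grid_square \<delta> (if horizontal then (i, j - 1) else (i - 1, j))"
    using assms(1) by (auto simp: ab mem_grid_square algebra_simps)
  then show "closed_segment a b \<subseteq> grid_square \<delta> (i, j)"
    "closed_segment a b \<subseteq> grid_square \<delta> (if horizontal then (i, j - 1) else (i - 1, j))"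
    by (simp_all add: closed_segment_subset convex_grid_square)
qed

lemma grid_edge_between_squares:
  assumes "\<delta> \<ge> 0" "boundary_multiplicity I e \<noteq> 0" "grid_edge \<delta> e = (a, b)"
  obtains x y where "x \<in> I" "y \<notin> I" "closed_segment a b \<subseteq> grid_square \<delta> x \<inter> grid_square \<delta> y"
proof -
  obtain i j horizontal where e: "e = ((i, j), horizontal)"
    by (metis prod.collapse)
  let ?x' = "if horizontal then (i, j - 1) else (i - 1, j)"
  have "(i, j) \<in> I \<longleftrightarrow> ?x' \<notin> I"
    using assms(2) by (auto simp: e boundary_multiplicity_def split: if_splits)
  then show thesis
    using grid_edge_subset_squares[OF assms(1) assms(3)[unfolded e]] that[of "(i, j)" ?x'] that[of ?x' "(i, j)"]
    by blast
qed

lemma sum_contour_integral_grid_boundary: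
  assumes R: "finite R" and I: "\<And>i j. (i, j) \<in> I \<Longrightarrow> (i, j) \<in> R \<and> (i + 1, j) \<in> R \<and> (i, j + 1) \<in> R"
    and f: "\<And>x. x \<in> I \<Longrightarrow> continuous_on (path_image (grid_boundary \<delta> x)) f"
  shows "(\<Sum>x\<in>I. contour_integral (grid_boundary \<delta> x) f) = (\<Sum>e\<in>R \<times> UNIV.
    of_int (boundary_multiplicity I e) * (\<lambda>(a, b). contour_integral (linepath a b) f) (grid_edge \<delta> e))"
proof -
  define J where "J e = (\<lambda>(a, b). contour_integral (linepath a b) f) (grid_edge \<delta> e)" for e
  have "(\<Sum>x\<in>I. contour_integral (grid_boundary \<delta> x) f) =
      (\<Sum>(i, j)\<in>I. J ((i, j), True) + J ((i + 1, j), False) - J ((i, j + 1), True) - J ((i, j), False))"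
    using f by (intro sum.cong) (auto simp: J_def contour_integral_grid_boundary)
  also have "\<dots> = (\<Sum>(i, j)\<in>R. (of_bool ((i, j) \<in> I) - of_bool ((i, j - 1) \<in> I)) * J ((i, j), True)
      + (of_bool ((i - 1, j) \<in> I) - of_bool ((i, j) \<in> I)) * J ((i, j), False))"
    using sum_grid_telescope[OF R I, where hor = "\<lambda>x. J (x, True)" and ver = "\<lambda>x. J (x, False)"] by simp
  also have "\<dots> = (\<Sum>x\<in>R. \<Sum>horizontal\<in>UNIV. of_int (boundary_multiplicity I (x, horizontal)) * J (x, horizontal))"
    by (simp add: UNIV_bool boundary_multiplicity_def case_prod_beta add.commute)
  finally show ?thesis
    by (simp add: J_def sum.cartesian_product)
qed

lemma Cauchy_integral_formula_grid_box:
  assumes \<delta>: "\<delta> > 0" and R: "finite R"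
    and I: "\<And>i j. (i, j) \<in> I \<Longrightarrow> (i, j) \<in> R \<and> (i + 1, j) \<in> R \<and> (i, j + 1) \<in> R"
    and convex: "\<And>x. x \<in> I \<Longrightarrow> \<exists>S. open S \<and> convex S \<and> grid_square \<delta> x \<subseteq> S \<and> S \<subseteq> U"
    and h: "h holomorphic_on U" and x0: "x0 \<in> I" and z: "z \<in> grid_box \<delta> x0"
  shows "2 * pi * \<i> * h z = (\<Sum>e\<in>R \<times> UNIV. of_int (boundary_multiplicity I e) *
    (\<lambda>(a, b). contour_integral (linepath a b) (\<lambda>\<zeta>. h \<zeta> / (\<zeta> - z))) (grid_edge \<delta> e))"
proof -
  have z_boundary: "z \<notin> path_image (grid_boundary \<delta> x)" for x
    using grid_square_eq_of_mem_box[OF \<delta> z, of x] z \<delta> by (auto simp: path_image_grid_boundary)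
  have square: "contour_integral (grid_boundary \<delta> x) (\<lambda>\<zeta>. h \<zeta> / (\<zeta> - z)) = (if x = x0 then 2 * pi * \<i> * h z else 0)"
    if x: "x \<in> I" for x
  proof -
    obtain S where S: "open S" "convex S" "grid_square \<delta> x \<subseteq> S" "S \<subseteq> U"
      using convex[OF x] by blast
    obtain i j where ij: "x = (i, j)" by fastforce
    have "contour_integral (grid_boundary \<delta> x) (\<lambda>\<zeta>. h \<zeta> / (\<zeta> - z)) = (if z \<in> grid_box \<delta> x then 2 * pi * \<i> * h z else 0)"
      using Cauchy_integral_rectpath[OF S(1,2) _ _ _ holomorphic_on_subset[OF h S(4)]
        z_boundary[of x, unfolded ij grid_boundary_def prod.case]] S(3) \<delta>
      by (simp add: ij grid_boundary_def grid_box_def grid_square_def)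
    moreover have "z \<in> grid_box \<delta> x \<longleftrightarrow> x = x0"
      using grid_square_eq_of_mem_box[OF \<delta> z, of x] grid_box_subset_square z by blast
    ultimately show ?thesis
      by simp
  qed
  have "finite I"
    using I by (force intro: finite_subset[OF _ R])
  then have "2 * pi * \<i> * h z = (\<Sum>x\<in>I. contour_integral (grid_boundary \<delta> x) (\<lambda>\<zeta>. h \<zeta> / (\<zeta> - z)))"
    using x0 by (simp add: square)
  also have "\<dots> = (\<Sum>e\<in>R \<times> UNIV. of_int (boundary_multiplicity I e) *
      (\<lambda>(a, b). contour_integral (linepath a b) (\<lambda>\<zeta>. h \<zeta> / (\<zeta> - z))) (grid_edge \<delta> e))"
  proof (rule sum_contour_integral_grid_boundary[OF R I])
    fix x assume "x \<in> I"
    then have "grid_square \<delta> x \<subseteq> U"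
      using convex by blast
    then have "path_image (grid_boundary \<delta> x) \<subseteq> U - {z}"
      using z_boundary[of x] \<delta> by (auto simp: path_image_grid_boundary)
    then show "continuous_on (path_image (grid_boundary \<delta> x)) (\<lambda>\<zeta>. h \<zeta> / (\<zeta> - z))"
      by (intro continuous_intros continuous_on_subset[OF holomorphic_on_imp_continuous_on[OF h]]) auto
  qed
  finally show ?thesis .
qed

lemma Cauchy_integral_formula_grid:
  assumes \<delta>: "\<delta> > 0" and R: "finite R"
    and I: "\<And>i j. (i, j) \<in> I \<Longrightarrow> (i, j) \<in> R \<and> (i + 1, j) \<in> R \<and> (i, j + 1) \<in> R"
    and convex: "\<And>x. x \<in> I \<Longrightarrow> \<exists>S. open S \<and> convex S \<and> grid_square \<delta> x \<subseteq> S \<and> S \<subseteq> U"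
    and h: "h holomorphic_on U" and x0: "x0 \<in> I" and z: "z \<in> grid_square \<delta> x0"
    and edges: "\<And>e a b. boundary_multiplicity I e \<noteq> 0 \<Longrightarrow> grid_edge \<delta> e = (a, b) \<Longrightarrow>
      closed_segment a b \<subseteq> U - {z}"
  shows "2 * pi * \<i> * h z = (\<Sum>e\<in>R \<times> UNIV. of_int (boundary_multiplicity I e) *
    (\<lambda>(a, b). contour_integral (linepath a b) (\<lambda>\<zeta>. h \<zeta> / (\<zeta> - z))) (grid_edge \<delta> e))"
proof -
  obtain S where S: "open S" "grid_square \<delta> x0 \<subseteq> S" "S \<subseteq> U"
    using convex[OF x0] by blast
  then have "isCont h z"
    using z holomorphic_on_imp_continuous_on[OF holomorphic_on_subset[OF h S(3)]]
    by (metis continuous_on_eq_continuous_at subsetD)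
  then have h_cont: "isCont (\<lambda>y. 2 * pi * \<i> * h y) z"
    by (intro continuous_intros)
  have sum_cont: "isCont (\<lambda>y. \<Sum>e\<in>R \<times> UNIV. of_int (boundary_multiplicity I e) *
      (\<lambda>(a, b). contour_integral (linepath a b) (\<lambda>\<zeta>. h \<zeta> / (\<zeta> - y))) (grid_edge \<delta> e)) z"
  proof (intro continuous_sum)
    fix e
    obtain a b where ab: "grid_edge \<delta> e = (a, b)"
      by fastforce
    show "isCont (\<lambda>y. of_int (boundary_multiplicity I e) *
        (\<lambda>(a, b). contour_integral (linepath a b) (\<lambda>\<zeta>. h \<zeta> / (\<zeta> - y))) (grid_edge \<delta> e)) z"
    proof (cases "boundary_multiplicity I e = 0")
      case False
      with edges[OF False ab] show ?thesis
        unfolding ab prod.case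
        by (intro continuous_mult continuous_const isCont_contour_integral_Cauchy_kernel
            continuous_on_subset[OF holomorphic_on_imp_continuous_on[OF h]]) auto
    qed simp
  qed
  have "z \<in> closure (grid_box \<delta> x0)"
    using z closure_grid_box[OF \<delta>] by simp
  from eq_on_closure_isCont[OF h_cont sum_cont this Cauchy_integral_formula_grid_box[OF \<delta> R I convex h x0]]
  show ?thesis .
qed

lemma grid_cover_compact:
  assumes K: "compact K" and U: "open U" "K \<subseteq> U"
  obtains \<delta> R where "\<delta> > 0" "finite R"
    "\<And>i j. grid_square \<delta> (i, j) \<inter> K \<noteq> {} \<Longrightarrow> (i, j) \<in> R \<and> (i + 1, j) \<in> R \<and> (i, j + 1) \<in> R"
    "\<And>x. grid_square \<delta> x \<inter> K \<noteq> {} \<Longrightarrow> \<exists>S. open S \<and> convex S \<and> grid_square \<delta> x \<subseteq> S \<and> S \<subseteq> U"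
proof -
  obtain \<epsilon> where \<epsilon>: "\<epsilon> > 0" "(\<Union>x\<in>K. ball x \<epsilon>) \<subseteq> U"
    using compact_subset_open_imp_ball_epsilon_subset[OF K U] by blast
  define \<delta> where "\<delta> = \<epsilon> / 3"
  have \<delta>: "\<delta> > 0"
    using \<epsilon> by (simp add: \<delta>_def)
  obtain B where B: "\<And>z. z \<in> K \<Longrightarrow> cmod z \<le> B"
    using compact_imp_bounded[OF K] bounded_iff by blast
  define N where "N = \<lceil>B / \<delta>\<rceil> + 1"
  show thesis
  proof (rule that[OF \<delta>, of "{-N - 1..N + 1} \<times> {-N - 1..N + 1}"])
    fix i j assume "grid_square \<delta> (i, j) \<inter> K \<noteq> {}"
    then have "\<bar>i\<bar> \<le> N \<and> \<bar>j\<bar> \<le> N"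
      using grid_square_index_bound[OF \<delta> _ B] unfolding N_def by blast
    then show "(i, j) \<in> {-N - 1..N + 1} \<times> {-N - 1..N + 1} \<and> (i + 1, j) \<in> {-N - 1..N + 1} \<times> {-N - 1..N + 1}
        \<and> (i, j + 1) \<in> {-N - 1..N + 1} \<times> {-N - 1..N + 1}"
      by auto
  next
    fix x assume "grid_square \<delta> x \<inter> K \<noteq> {}"
    then obtain z0 where z0: "z0 \<in> grid_square \<delta> x" "z0 \<in> K"
      by blast
    have "grid_square \<delta> x \<subseteq> ball z0 \<epsilon>"
    proof
      fix y assume "y \<in> grid_square \<delta> x"
      then have "dist z0 y \<le> 2 * \<delta>"
        by (rule dist_le_grid_square[OF z0(1)])
      then show "y \<in> ball z0 \<epsilon>"
        using \<delta> unfolding \<delta>_def by simp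
    qed
    moreover have "ball z0 \<epsilon> \<subseteq> U"
      using \<epsilon>(2) z0(2) by blast
    ultimately show "\<exists>S. open S \<and> convex S \<and> grid_square \<delta> x \<subseteq> S \<and> S \<subseteq> U"
      by (intro exI[of _ "ball z0 \<epsilon>"]) auto
  qed simp
qed

lemma inj_grid_edge: "\<delta> \<noteq> 0 \<Longrightarrow> inj (grid_edge \<delta>)"
  by (auto simp: inj_def grid_edge_def grid_point_def complex_eq_iff split: if_splits)

lemma Cauchy_integral_formula_segments:
  assumes K: "compact K" and U: "open U" "K \<subseteq> U"
  obtains E :: "(complex \<times> complex) set" and c :: "complex \<times> complex \<Rightarrow> complex"
  where "finite E" "\<And>a b. (a, b) \<in> E \<Longrightarrow> closed_segment a b \<subseteq> U - K"
    "\<And>h z. h holomorphic_on U \<Longrightarrow> z \<in> K \<Longrightarrow>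
       h z = (\<Sum>(a, b)\<in>E. c (a, b) * contour_integral (linepath a b) (\<lambda>\<zeta>. h \<zeta> / (\<zeta> - z)))"
proof -
  obtain \<delta> R where \<delta>: "\<delta> > 0" and R: "finite R"
    and IR: "\<And>i j. grid_square \<delta> (i, j) \<inter> K \<noteq> {} \<Longrightarrow> (i, j) \<in> R \<and> (i + 1, j) \<in> R \<and> (i, j + 1) \<in> R"
    and convex: "\<And>x. grid_square \<delta> x \<inter> K \<noteq> {} \<Longrightarrow> \<exists>S. open S \<and> convex S \<and> grid_square \<delta> x \<subseteq> S \<and> S \<subseteq> U"
    using grid_cover_compact[OF K U] by blast
  define I where "I = {x. grid_square \<delta> x \<inter> K \<noteq> {}}"
  define E0 where "E0 = {e \<in> R \<times> UNIV. boundary_multiplicity I e \<noteq> 0}"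
  have E0: "closed_segment a b \<subseteq> U - K"
    if e: "boundary_multiplicity I e \<noteq> 0" "grid_edge \<delta> e = (a, b)" for e a b
  proof -
    obtain x y where "x \<in> I" "y \<notin> I" "closed_segment a b \<subseteq> grid_square \<delta> x \<inter> grid_square \<delta> y"
      using grid_edge_between_squares[OF less_imp_le[OF \<delta>] e] by blast
    then show ?thesis
      using convex[of x] unfolding I_def by blast
  qed
  define c where "c e = of_int (boundary_multiplicity I e) / (2 * pi * \<i>)" for e
  define J where "J h z = (\<lambda>(a, b). contour_integral (linepath a b) (\<lambda>\<zeta>. h \<zeta> / (\<zeta> - z)))" for h z
  have formula: "h z = (\<Sum>e\<in>E0. c e * J h z (grid_edge \<delta> e))" if h: "h holomorphic_on U" and z: "z \<in> K" for h z
  proof -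
    have "z \<in> grid_square \<delta> (\<lfloor>Re z / \<delta>\<rfloor>, \<lfloor>Im z / \<delta>\<rfloor>)"
      by (rule mem_grid_square_floor[OF \<delta>])
    with Cauchy_integral_formula_grid[OF \<delta> R, of I U h] IR convex h z E0
    have "2 * pi * \<i> * h z = (\<Sum>e\<in>R \<times> UNIV. of_int (boundary_multiplicity I e) * J h z (grid_edge \<delta> e))"
      unfolding I_def J_def by blast
    also have "\<dots> = (\<Sum>e\<in>E0. of_int (boundary_multiplicity I e) * J h z (grid_edge \<delta> e))"
      using R by (intro sum.mono_neutral_right) (auto simp: E0_def)
    finally show ?thesis
      by (simp add: c_def sum_divide_distrib[symmetric] field_simps)
  qed
  have inj: "inj (grid_edge \<delta>)"
    using \<delta> by (simp add: inj_grid_edge)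
  show thesis
  proof
    show "finite (grid_edge \<delta> ` E0)"
      using R by (simp add: E0_def)
    show "closed_segment a b \<subseteq> U - K" if "(a, b) \<in> grid_edge \<delta> ` E0" for a b
      using that E0 unfolding E0_def by (metis (mono_tags, lifting) imageE mem_Collect_eq)
    show "h z = (\<Sum>(a, b)\<in>grid_edge \<delta> ` E0. (c \<circ> inv (grid_edge \<delta>)) (a, b) *
        contour_integral (linepath a b) (\<lambda>\<zeta>. h \<zeta> / (\<zeta> - z)))"
      if "h holomorphic_on U" "z \<in> K" for h z
      using formula[OF that] inj by (simp add: sum.reindex inj_on_subset[OF inj] J_def case_prod_beta)
  qed
qed

section \<open>Approximation by holomorphic functions of several variables\<close>

lemma sum_regroup_image:
  fixes w :: "'a \<Rightarrow> 'c::semiring_0"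
  assumes "finite A"
  shows "(\<Sum>k\<in>A. w k * g (\<nu> k)) = (\<Sum>y\<in>\<nu> ` A. (\<Sum>k\<in>{k\<in>A. \<nu> k = y}. w k) * g y)"
  unfolding sum.image_gen[OF assms, of "\<lambda>k. w k * g (\<nu> k)" \<nu>] sum_distrib_right
  by (intro sum.cong) auto

lemma sum_mult_sum_UN:
  fixes c :: "'e \<Rightarrow> 'a::comm_semiring_0"
  assumes E: "finite E" and N: "\<And>e. e \<in> E \<Longrightarrow> finite (N e)"
  shows "(\<Sum>e\<in>E. c e * (\<Sum>\<zeta>\<in>N e. \<alpha> e \<zeta> * g \<zeta>)) =
    (\<Sum>\<zeta>\<in>(\<Union>e\<in>E. N e). (\<Sum>e\<in>E. c e * (if \<zeta> \<in> N e then \<alpha> e \<zeta> else 0)) * g \<zeta>)"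
proof -
  have "(\<Sum>\<zeta>\<in>N e. \<alpha> e \<zeta> * g \<zeta>) = (\<Sum>\<zeta>\<in>(\<Union>e\<in>E. N e). (if \<zeta> \<in> N e then \<alpha> e \<zeta> else 0) * g \<zeta>)"
    if "e \<in> E" for e
    using that E N by (intro sum.mono_neutral_cong_left) auto
  then have "(\<Sum>e\<in>E. c e * (\<Sum>\<zeta>\<in>N e. \<alpha> e \<zeta> * g \<zeta>)) =
      (\<Sum>e\<in>E. \<Sum>\<zeta>\<in>(\<Union>e\<in>E. N e). c e * (if \<zeta> \<in> N e then \<alpha> e \<zeta> else 0) * g \<zeta>)"
    by (simp add: sum_distrib_left mult.assoc)
  also have "\<dots> = (\<Sum>\<zeta>\<in>(\<Union>e\<in>E. N e). (\<Sum>e\<in>E. c e * (if \<zeta> \<in> N e then \<alpha> e \<zeta> else 0)) * g \<zeta>)"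
    by (subst sum.swap) (simp add: sum_distrib_right)
  finally show ?thesis .
qed

lemma Cauchy_kernel_Riemann_sum:
  fixes a b :: complex and H :: "complex \<Rightarrow> 'p::metric_space \<Rightarrow> complex"
  assumes K: "compact K" and P: "compact P" and H: "continuous_on (closed_segment a b \<times> P) (\<lambda>(\<zeta>, p). H \<zeta> p)"
    and ab: "closed_segment a b \<inter> K = {}" and e: "e > 0"
  obtains N \<alpha> where "finite N" "N \<subseteq> closed_segment a b" "\<And>z p. z \<in> K \<Longrightarrow> p \<in> P \<Longrightarrow>
    cmod (contour_integral (linepath a b) (\<lambda>\<zeta>. H \<zeta> p / (\<zeta> - z)) - (\<Sum>\<zeta>\<in>N. \<alpha> \<zeta> * (H \<zeta> p / (\<zeta> - z)))) \<le> e"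
proof -
  have "continuous_on (closed_segment a b \<times> (K \<times> P)) (\<lambda>x. H (fst x) (snd (snd x)))"
    by (rule continuous_on_compose2[OF H, of _ "\<lambda>x. (fst x, snd (snd x))", simplified])
      (auto intro!: continuous_on_Pair continuous_on_fst continuous_on_snd continuous_on_id)
  then have "continuous_on (closed_segment a b \<times> (K \<times> P)) (\<lambda>(\<zeta>, q). H \<zeta> (snd q) / (\<zeta> - fst q))"
    unfolding case_prod_beta using ab by (intro continuous_intros) auto
  from contour_integral_linepath_Riemann_sum[OF compact_Times[OF K P] this e]
  obtain n :: nat where "n > 0" and n: "\<And>q. q \<in> K \<times> P \<Longrightarrow>
      cmod (contour_integral (linepath a b) (\<lambda>\<zeta>. H \<zeta> (snd q) / (\<zeta> - fst q))
        - (\<Sum>i<n. H (linepath a b (i/n)) (snd q) / (linepath a b (i/n) - fst q) * ((b - a) / n))) \<le> e"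
    by blast
  define node where "node i = linepath a b (i/n)" for i :: nat
  show thesis
  proof (rule that[of "node ` {..<n}" "\<lambda>y. \<Sum>i\<in>{i\<in>{..<n}. node i = y}. (b - a) / n"])
    show "finite (node ` {..<n})"
      by simp
    show "node ` {..<n} \<subseteq> closed_segment a b"
      using \<open>n > 0\<close> by (auto simp: node_def intro!: linepath_in_path)
    fix z p assume "z \<in> K" "p \<in> P"
    with n[of "(z, p)"] sum_regroup_image[of "{..<n}" "\<lambda>_. (b - a) / n" "\<lambda>y. H y p / (y - z)" node]
    show "cmod (contour_integral (linepath a b) (\<lambda>\<zeta>. H \<zeta> p / (\<zeta> - z))
        - (\<Sum>\<zeta>\<in>node ` {..<n}. (\<Sum>i\<in>{i\<in>{..<n}. node i = \<zeta>}. (b - a) / n) * (H \<zeta> p / (\<zeta> - z)))) \<le> e"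
      by (simp add: node_def mult.commute)
  qed
qed

lemma Cauchy_kernel_sum_approx:
  fixes H :: "complex \<Rightarrow> 'p::metric_space \<Rightarrow> complex"
  assumes K: "compact K" and P: "compact P" and U: "open U" "K \<subseteq> U"
    and cont: "continuous_on (U \<times> P) (\<lambda>(z, p). H z p)"
    and holo: "\<And>p. p \<in> P \<Longrightarrow> (\<lambda>z. H z p) holomorphic_on U" and \<epsilon>: "\<epsilon> > 0"
  obtains N \<alpha> where "finite N" "N \<subseteq> U - K"
    "\<And>z p. z \<in> K \<Longrightarrow> p \<in> P \<Longrightarrow> cmod (H z p - (\<Sum>\<zeta>\<in>N. \<alpha> \<zeta> * H \<zeta> p / (\<zeta> - z))) \<le> \<epsilon>"
proof -
  obtain E c where E: "finite E" "\<And>a b. (a, b) \<in> E \<Longrightarrow> closed_segment a b \<subseteq> U - K"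
    and Cauchy: "\<And>h z. h holomorphic_on U \<Longrightarrow> z \<in> K \<Longrightarrow>
      h z = (\<Sum>(a, b)\<in>E. c (a, b) * contour_integral (linepath a b) (\<lambda>\<zeta>. h \<zeta> / (\<zeta> - z)))"
    using Cauchy_integral_formula_segments[OF K U] by blast
  define C where "C = (\<Sum>e\<in>E. cmod (c e)) + 1"
  have C: "C > 0"
    by (simp add: C_def add_nonneg_pos sum_nonneg)
  define err where "err e N \<alpha> z p = cmod (contour_integral (linepath (fst e) (snd e)) (\<lambda>\<zeta>. H \<zeta> p / (\<zeta> - z))
    - (\<Sum>\<zeta>\<in>N. \<alpha> \<zeta> * (H \<zeta> p / (\<zeta> - z))))" for e N and \<alpha> :: "complex \<Rightarrow> complex" and z p
  have "\<forall>e\<in>E. \<exists>N \<alpha>. finite N \<and> N \<subseteq> U - K \<and> (\<forall>z\<in>K. \<forall>p\<in>P. err e N \<alpha> z p \<le> \<epsilon> / C)"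
  proof
    fix e assume "e \<in> E"
    then have seg: "closed_segment (fst e) (snd e) \<subseteq> U - K"
      using E(2)[of "fst e" "snd e"] by simp
    then have sub: "closed_segment (fst e) (snd e) \<times> P \<subseteq> U \<times> P"
      and disj: "closed_segment (fst e) (snd e) \<inter> K = {}"
      by auto
    obtain N \<alpha> where "finite N" "N \<subseteq> closed_segment (fst e) (snd e)"
      "\<And>z p. z \<in> K \<Longrightarrow> p \<in> P \<Longrightarrow> err e N \<alpha> z p \<le> \<epsilon> / C"
      unfolding err_def
      by (rule Cauchy_kernel_Riemann_sum[OF K P continuous_on_subset[OF cont sub] disj divide_pos_pos[OF \<epsilon> C]])
        blast
    with seg show "\<exists>N \<alpha>. finite N \<and> N \<subseteq> U - K \<and> (\<forall>z\<in>K. \<forall>p\<in>P. err e N \<alpha> z p \<le> \<epsilon> / C)"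
      by (intro exI[of _ N] exI[of _ \<alpha>]) auto
  qed
  then obtain N where "\<forall>e\<in>E. \<exists>\<alpha>. finite (N e) \<and> N e \<subseteq> U - K \<and> (\<forall>z\<in>K. \<forall>p\<in>P. err e (N e) \<alpha> z p \<le> \<epsilon> / C)"
    by (rule bchoice[THEN exE])
  then obtain \<alpha> where N\<alpha>: "\<forall>e\<in>E. finite (N e) \<and> N e \<subseteq> U - K \<and> (\<forall>z\<in>K. \<forall>p\<in>P. err e (N e) (\<alpha> e) z p \<le> \<epsilon> / C)"
    by (rule bchoice[THEN exE])
  define \<beta> where "\<beta> \<zeta> = (\<Sum>e\<in>E. c e * (if \<zeta> \<in> N e then \<alpha> e \<zeta> else 0))" for \<zeta>
  have approx: "cmod (H z p - (\<Sum>\<zeta>\<in>(\<Union>e\<in>E. N e). \<beta> \<zeta> * (H \<zeta> p / (\<zeta> - z)))) \<le> \<epsilon>"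
    if z: "z \<in> K" and p: "p \<in> P" for z p
  proof -
    have "H z p - (\<Sum>\<zeta>\<in>(\<Union>e\<in>E. N e). \<beta> \<zeta> * (H \<zeta> p / (\<zeta> - z))) = (\<Sum>e\<in>E. c e *
        (contour_integral (linepath (fst e) (snd e)) (\<lambda>\<zeta>. H \<zeta> p / (\<zeta> - z)) - (\<Sum>\<zeta>\<in>N e. \<alpha> e \<zeta> * (H \<zeta> p / (\<zeta> - z)))))"
      using Cauchy[OF holo[OF p] z] sum_mult_sum_UN[OF E(1), of N c \<alpha> "\<lambda>\<zeta>. H \<zeta> p / (\<zeta> - z)"] N\<alpha>
      by (simp add: \<beta>_def case_prod_beta right_diff_distrib sum_subtractf)
    also have "cmod \<dots> \<le> (\<Sum>e\<in>E. cmod (c e) * (\<epsilon> / C))"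
    proof (rule order_trans[OF norm_sum sum_mono])
      fix e assume "e \<in> E"
      with N\<alpha> z p have "err e (N e) (\<alpha> e) z p \<le> \<epsilon> / C"
        by blast
      from mult_left_mono[OF this norm_ge_zero[of "c e"]]
      show "cmod (c e * (contour_integral (linepath (fst e) (snd e)) (\<lambda>\<zeta>. H \<zeta> p / (\<zeta> - z))
          - (\<Sum>\<zeta>\<in>N e. \<alpha> e \<zeta> * (H \<zeta> p / (\<zeta> - z))))) \<le> cmod (c e) * (\<epsilon> / C)"
        by (simp add: err_def norm_mult)
    qed
    also have "\<dots> = (C - 1) * (\<epsilon> / C)"
      by (simp only: sum_distrib_right[symmetric]) (simp add: C_def)
    also have "\<dots> \<le> \<epsilon>"
      using C \<epsilon> by (simp add: field_simps)
    finally show ?thesis .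
  qed
  show thesis
  proof (rule that[of "\<Union>e\<in>E. N e" \<beta>])
    show "finite (\<Union>e\<in>E. N e)" "(\<Union>e\<in>E. N e) \<subseteq> U - K"
      using E(1) N\<alpha> by auto
  qed (use approx in simp)
qed

lemma norm_Cauchy_kernel_sum_le:
  fixes \<alpha> u :: "complex \<Rightarrow> complex"
  assumes N: "finite N" and z: "z \<in> K" and \<epsilon>: "\<epsilon> \<ge> 0"
    and u: "\<And>\<zeta>. \<zeta> \<in> N \<Longrightarrow> cmod (u \<zeta>) \<le> \<epsilon> * infdist \<zeta> K / ((\<Sum>\<zeta>\<in>N. cmod (\<alpha> \<zeta>)) + 1)"
  shows "cmod (\<Sum>\<zeta>\<in>N. \<alpha> \<zeta> * u \<zeta> / (\<zeta> - z)) \<le> \<epsilon>"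
proof -
  define A where "A = (\<Sum>\<zeta>\<in>N. cmod (\<alpha> \<zeta>)) + 1"
  have A: "A > 0"
    by (simp add: A_def add_nonneg_pos sum_nonneg)
  have bound: "cmod (u \<zeta>) / cmod (\<zeta> - z) \<le> \<epsilon> / A" if \<zeta>: "\<zeta> \<in> N" for \<zeta>
  proof (cases "infdist \<zeta> K = 0")
    case True
    then show ?thesis
      using u[OF \<zeta>] A \<epsilon> by simp
  next
    case False
    then have "0 < infdist \<zeta> K" "infdist \<zeta> K \<le> cmod (\<zeta> - z)"
      using infdist_nonneg infdist_le[OF z, of \<zeta>] by (auto simp: dist_norm less_le)
    then have "cmod (u \<zeta>) / cmod (\<zeta> - z) \<le> (\<epsilon> * infdist \<zeta> K / A) / infdist \<zeta> K"
      using u[OF \<zeta>] A \<epsilon> by (intro frac_le) (auto simp: A_def)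
    then show ?thesis
      using False by simp
  qed
  have "cmod (\<Sum>\<zeta>\<in>N. \<alpha> \<zeta> * u \<zeta> / (\<zeta> - z)) \<le> (\<Sum>\<zeta>\<in>N. cmod (\<alpha> \<zeta>) * (\<epsilon> / A))"
  proof (rule order_trans[OF norm_sum sum_mono])
    fix \<zeta> assume "\<zeta> \<in> N"
    from mult_left_mono[OF bound[OF this] norm_ge_zero[of "\<alpha> \<zeta>"]]
    show "cmod (\<alpha> \<zeta> * u \<zeta> / (\<zeta> - z)) \<le> cmod (\<alpha> \<zeta>) * (\<epsilon> / A)"
      by (simp add: norm_mult norm_divide)
  qed
  also have "\<dots> = (A - 1) * (\<epsilon> / A)"
    by (simp only: sum_distrib_right[symmetric]) (simp add: A_def)
  also have "\<dots> \<le> \<epsilon>"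
    using A \<epsilon> by (simp add: field_simps)
  finally show ?thesis .
qed

lemma holoW_approx_holo_vec:
  fixes H :: "complex \<Rightarrow> complex^'m \<Rightarrow> complex"
  assumes K1: "compact K1" and K2: "compact K2" and H: "holoW K2 H U" and K1U: "K1 \<subseteq> U"
    and \<epsilon>: "\<epsilon> > 0"
  obtains \<Omega> f where "holo_vec f \<Omega>"
    "\<And>z w. z \<in> K1 \<Longrightarrow> w \<in> K2 \<Longrightarrow> pair_vec z w \<in> \<Omega> \<and> cmod (H z w - f (pair_vec z w)) \<le> \<epsilon>"
proof (cases "K1 = {}")
  case True
  then show thesis
    using that[OF holo_vec_const[OF open_UNIV]] by blast
next
  case False
  have U: "open U"
    using H unfolding holoW_def by blast
  obtain N \<alpha> where N: "finite N" "N \<subseteq> U - K1"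
    and Cauchy_sum: "\<And>z w. z \<in> K1 \<Longrightarrow> w \<in> K2 \<Longrightarrow>
      cmod (H z w - (\<Sum>\<zeta>\<in>N. \<alpha> \<zeta> * H \<zeta> w / (\<zeta> - z))) \<le> \<epsilon> / 2"
    using Cauchy_kernel_sum_approx[OF K1 K2 U K1U holoW_continuous_on[OF H K2] holoW_holomorphic[OF H]
          half_gt_zero[OF \<epsilon>]] by blast
  define \<tau> where "\<tau> \<zeta> = \<epsilon> / 2 * infdist \<zeta> K1 / ((\<Sum>\<zeta>\<in>N. cmod (\<alpha> \<zeta>)) + 1)" for \<zeta>
  have "\<exists>V g. K2 \<subseteq> V \<and> holo_vec g V \<and> (\<forall>w\<in>K2. cmod (H \<zeta> w - g w) \<le> \<tau> \<zeta>)" if \<zeta>: "\<zeta> \<in> N" for \<zeta>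
  proof -
    have "infdist \<zeta> K1 > 0"
      using N(2) \<zeta> False by (intro infdist_pos_not_in_closed compact_imp_closed K1) auto
    then have "\<tau> \<zeta> > 0"
      using \<epsilon> by (simp add: \<tau>_def add_nonneg_pos sum_nonneg)
    moreover have "H \<zeta> \<in> Obar K2"
      using H N(2) \<zeta> unfolding holoW_def by blast
    ultimately show ?thesis
      unfolding Obar_def by blast
  qed
  then obtain V g where Vg: "\<And>\<zeta>. \<zeta> \<in> N \<Longrightarrow> K2 \<subseteq> V \<zeta> \<and> holo_vec (g \<zeta>) (V \<zeta>) \<and>
      (\<forall>w\<in>K2. cmod (H \<zeta> w - g \<zeta> w) \<le> \<tau> \<zeta>)"
    by metis
  show thesis
  proof (rule that)
    show "holo_vec (\<lambda>v. \<Sum>\<zeta>\<in>N. \<alpha> \<zeta> * g \<zeta> (snd_vec v) / (\<zeta> - v $ Inl ()))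
        (\<Inter>\<zeta>\<in>N. {v. v $ Inl () \<noteq> \<zeta> \<and> snd_vec v \<in> V \<zeta>})"
      using Vg by (intro holo_vec_Cauchy_kernel_sum[OF N(1)]) blast
    fix z w assume z: "z \<in> K1" and w: "w \<in> K2"
    have "cmod (\<Sum>\<zeta>\<in>N. \<alpha> \<zeta> * (H \<zeta> w - g \<zeta> w) / (\<zeta> - z)) \<le> \<epsilon> / 2"
      using Vg w \<epsilon> unfolding \<tau>_def by (intro norm_Cauchy_kernel_sum_le[OF N(1) z]) auto
    then have "cmod ((\<Sum>\<zeta>\<in>N. \<alpha> \<zeta> * H \<zeta> w / (\<zeta> - z)) - (\<Sum>\<zeta>\<in>N. \<alpha> \<zeta> * g \<zeta> w / (\<zeta> - z))) \<le> \<epsilon> / 2"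
      by (simp add: sum_subtractf[symmetric] diff_divide_distrib right_diff_distrib)
    with Cauchy_sum[OF z w] have "cmod (H z w - (\<Sum>\<zeta>\<in>N. \<alpha> \<zeta> * g \<zeta> w / (\<zeta> - z))) \<le> \<epsilon> / 2 + \<epsilon> / 2"
      by (rule norm_diff_triangle_le)
    moreover have "pair_vec z w \<in> (\<Inter>\<zeta>\<in>N. {v. v $ Inl () \<noteq> \<zeta> \<and> snd_vec v \<in> V \<zeta>})"
      using N(2) Vg z w by auto
    ultimately show "pair_vec z w \<in> (\<Inter>\<zeta>\<in>N. {v. v $ Inl () \<noteq> \<zeta> \<and> snd_vec v \<in> V \<zeta>}) \<and>
        cmod (H z w - (\<Sum>\<zeta>\<in>N. \<alpha> \<zeta> * g \<zeta> (snd_vec (pair_vec z w)) / (\<zeta> - pair_vec z w $ Inl ()))) \<le> \<epsilon>"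
      by simp
  qed
qed

lemma ObarW_approx_holo_vec:
  assumes K1: "compact K1" and K2: "compact K2" and F: "F \<in> ObarW K1 K2" and \<epsilon>: "\<epsilon> > 0"
  obtains \<Omega> f where "holo_vec f \<Omega>"
    "\<And>z w. z \<in> K1 \<Longrightarrow> w \<in> K2 \<Longrightarrow> pair_vec z w \<in> \<Omega> \<and> cmod (F z w - f (pair_vec z w)) \<le> \<epsilon>"
proof -
  have "\<forall>\<epsilon>>0. \<exists>U H. K1 \<subseteq> U \<and> holoW K2 H U \<and> (\<forall>z\<in>K1. \<forall>w\<in>K2. cmod (F z w - H z w) \<le> \<epsilon>)"
    using F unfolding ObarW_def by blast
  then obtain U H where U: "K1 \<subseteq> U" "holoW K2 H U" and FH: "\<forall>z\<in>K1. \<forall>w\<in>K2. cmod (F z w - H z w) \<le> \<epsilon> / 2"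
    using half_gt_zero[OF \<epsilon>] by blast
  obtain \<Omega> f where f: "holo_vec f \<Omega>" and Hf: "\<And>z w. z \<in> K1 \<Longrightarrow> w \<in> K2 \<Longrightarrow>
      pair_vec z w \<in> \<Omega> \<and> cmod (H z w - f (pair_vec z w)) \<le> \<epsilon> / 2"
    by (rule holoW_approx_holo_vec[OF K1 K2 U(2,1) half_gt_zero[OF \<epsilon>]]) blast
  show thesis
  proof (rule that[OF f])
    fix z w assume z: "z \<in> K1" and w: "w \<in> K2"
    have "cmod (F z w - f (pair_vec z w)) \<le> \<epsilon> / 2 + \<epsilon> / 2"
      using FH z w Hf[OF z w] by (intro norm_diff_triangle_le[of _ "H z w"]) auto
    then show "pair_vec z w \<in> \<Omega> \<and> cmod (F z w - f (pair_vec z w)) \<le> \<epsilon>"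
      using Hf[OF z w] by simp
  qed
qed

theorem mainTheorem11:
  fixes K1 :: "complex set" and K2 :: "(complex^'m) set"
    and F :: "complex \<Rightarrow> complex^'m \<Rightarrow> complex"
  assumes "compact K1" and "compact K2"
    and "F \<in> ObarW K1 K2"
  shows "(\<lambda>v. F (v $ Inl ()) (\<chi> j. v $ Inr j)) \<in> Obar ((\<lambda>(z, w). pair_vec z w) ` (K1 \<times> K2))"
proof -
  let ?S = "(\<lambda>(z, w). pair_vec z w) ` (K1 \<times> K2)"
  have G: "(\<lambda>v. F (v $ Inl ()) (\<chi> j. v $ Inr j)) = (\<lambda>v. (\<lambda>(z, w). F z w) (v $ Inl (), snd_vec v))"
    by (simp add: snd_vec_def)
  have "continuous_on ?S (\<lambda>v. (\<lambda>(z, w). F z w) (v $ Inl (), snd_vec v))"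
    by (rule continuous_on_compose2[OF ObarW_continuous_on[OF assms(3)] continuous_on_Pair[OF
          continuous_on_component[OF continuous_on_id] linear_continuous_on[OF bounded_linear_snd_vec]]])
      force
  moreover have "\<exists>U f. ?S \<subseteq> U \<and> holo_vec f U \<and>
      (\<forall>v\<in>?S. cmod ((\<lambda>(z, w). F z w) (v $ Inl (), snd_vec v) - f v) \<le> \<epsilon>)"
    if \<epsilon>: "\<epsilon> > 0" for \<epsilon>
  proof -
    obtain \<Omega> f where "holo_vec f \<Omega>"
      "\<And>z w. z \<in> K1 \<Longrightarrow> w \<in> K2 \<Longrightarrow> pair_vec z w \<in> \<Omega> \<and> cmod (F z w - f (pair_vec z w)) \<le> \<epsilon>"
      by (rule ObarW_approx_holo_vec[OF assms \<epsilon>]) blast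
    then show ?thesis
      by (intro exI[of _ \<Omega>] exI[of _ f]) auto
  qed
  ultimately show ?thesis
    unfolding G Obar_def by blast
qed

end
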